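(* For every formula $q\in F(V)$: $\vDash_{\mathbb{SQW^*}}q$ if and only if $\vdash_{\mathrm{sq}\L^*}q$.
   Context: Let $V$ be a set of propositional variables and $F(V)$ the set of formulas built from $V$ and the constant $1$ using $\to$ and $\neg$. Abbreviations: $p^+:=(p\to 1)\to 1$, $p^-:=(p\to\neg 1)\to\neg 1$ (binding more tightly than $\neg$), $p\vee q:=((p^+\to q^+)^+\to(\neg p)^-)\to((q^-\to p^-)^-\to p^-)$; an axiom "$p\leftrightarrow q$" stands for the two axioms $p\to q$ and $q\to p$. The logic $\mathrm{sq}\L^*$ has axiom schemas (for all $p,q,r\in F(V)$): (Q1) $(p\to q)\leftrightarrow(\neg q\to\neg p)$; (Q2) $1\leftrightarrow((1\to p)\to 1)$; (Q3) $p\leftrightarrow((q\to q)\to p)$; (Q4) $(p\to q)\leftrightarrow((q^+\to p^-)\to(p^+\to q^-))$; (Q5) $\neg(p\to q)\leftrightarrow(q\to p)$; (Q6) $(p\to(\neg p\to q))^+\leftrightarrow(p^+\to(\neg p^+\to q^+))$; (Q7) $(p\to(q\vee r))\leftrightarrow((p\to r)\vee(p\to q))$; (Q8) $(p\vee(q\vee r))\leftrightarrow((p\vee q)\vee r)$; (Q9) $((p\to 1)\to((q\to 1)\to r))\to((q\to 1)\to((p\to 1)\to r))$; (Q10) $p\to 1$; and rules: (qMP) from $(r\to r)\to p$ and $(r\to r)\to(p\to q)$ infer $(r\to r)\to q$; (Reg) from $p$ infer $(r\to r)\to p$; (AReg1) from $(r\to r)\to(p\to q)$ infer $p\to q$;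 (AReg2) from $(r\to r)\to\neg(p\to q)$ infer $\neg(p\to q)$; (AReg3) from $(r\to r)\to\neg 1$ infer $\neg 1$; (AReg4) from $(r\to r)\to 1$ infer $1$; (Inv1) from $p$ infer $\neg\neg p$; (Inv2) from $\neg\neg p$ infer $p$; (Flat) from $p$ and $\neg 1$ infer $\neg p$; (R2$'$) from $p\to q$ and $r\to t$ infer $(q\to r)\to(p\to t)$; (R3$'$) from $(r\to r)\to p$ infer $p^-$. $\vdash_{\mathrm{sq}\L^*}q$ means there is a finite sequence ending with $q$ whose members are axiom instances or follow from earlier members by rules. Semantics: a quasi-Wajsberg* algebra is an algebra $\langle W;\to,\neg,{}^+,{}^-,1\rangle$ of type $\langle 2,1,1,1,0\rangle$ such that for all $x,y,z$: $x\to y=\neg y\to\neg x$; $(x\to 1)\to((y\to 1)\to z)=(y\to 1)\to((x\to 1)\to z)$; $(1\to x)\to 1=1$; $(z\to z)\to(x\to y)=x\to y$; $(1\to 1)\to x^{+}=((1\to 1)\to x)^{+}=(x\to 1)\to 1$ and $(1\to 1)\to x^{-}=((1\to 1)\to x)^{-}=(x\to\neg 1)\to\neg 1$; $x\to y=(y^{+}\to x^{-})\to(x^{+}\to y^{-})$; $\neg(x\to y)=y\to x$; $\neg\neg x=x$; $(x\to(\neg x\to y))^{+}=x^{+}\to(\neg x^{+}\to y^{+})$; $x\vee y=y\vee x$; $x\vee(y\vee z)=(x\vee y)\vee z$; $x\to(y\vee z)=(x\to y)\vee(x\to z)$, with $x\vee y:=((x^{+}\to y^{+})^{+}\to(\neg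 x)^{-})\to((y^{-}\to x^{-})^{-}\to x^{-})$. A strong quasi-Wajsberg* algebra additionally satisfies $x^+=(1\to 1)\to x^+$ and $x^-=(1\to 1)\to x^-$; $\mathbb{SQW^*}$ is the class of these. An element $d$ of such an algebra $\mathbf{A}$ is designated if $d=(c\to 1)\to 1$ for some $c\in A$. $\vDash_{\mathbb{SQW^*}}q$ means: for every $\mathbf{A}\in\mathbb{SQW^*}$ and every assignment of the variables in $A$, the value of $q$ (computing $\to,\neg,1$ in $\mathbf{A}$) is designated. *)

theory Defs
  imports Main
begin

datatype 'v form = Var 'v | One | Imp "'v form" "'v form" | Neg "'v form"

definition fplus :: "'v form \<Rightarrow> 'v form" where
  "fplus p = Imp (Imp p One) One"

definition fminus :: "'v form \<Rightarrow> 'v form" where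
  "fminus p = Imp (Imp p (Neg One)) (Neg One)"

definition fdisj :: "'v form \<Rightarrow> 'v form \<Rightarrow> 'v form" where
  "fdisj p q = Imp (Imp (fplus (Imp (fplus p) (fplus q))) (fminus (Neg p)))
                   (Imp (fminus (Imp (fminus q) (fminus p))) (fminus p))"

inductive axiom :: "'v form \<Rightarrow> bool" where
  Q1a: "axiom (Imp (Imp p q) (Imp (Neg q) (Neg p)))"
| Q1b: "axiom (Imp (Imp (Neg q) (Neg p)) (Imp p q))"
| Q2a: "axiom (Imp One (Imp (Imp One p) One))"
| Q2b: "axiom (Imp (Imp (Imp One p) One) One)"
| Q3a: "axiom (Imp p (Imp (Imp q q) p))"
| Q3b: "axiom (Imp (Imp (Imp q q) p) p)"
| Q4a: "axiom (Imp (Imp p q) (Imp (Imp (fplus q) (fminus p)) (Imp (fplus p) (fminus q))))"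
| Q4b: "axiom (Imp (Imp (Imp (fplus q) (fminus p)) (Imp (fplus p) (fminus q))) (Imp p q))"
| Q5a: "axiom (Imp (Neg (Imp p q)) (Imp q p))"
| Q5b: "axiom (Imp (Imp q p) (Neg (Imp p q)))"
| Q6a: "axiom (Imp (fplus (Imp p (Imp (Neg p) q)))
                   (Imp (fplus p) (Imp (Neg (fplus p)) (fplus q))))"
| Q6b: "axiom (Imp (Imp (fplus p) (Imp (Neg (fplus p)) (fplus q)))
                   (fplus (Imp p (Imp (Neg p) q))))"
| Q7a: "axiom (Imp (Imp p (fdisj q r)) (fdisj (Imp p r) (Imp p q)))"
| Q7b: "axiom (Imp (fdisj (Imp p r) (Imp p q)) (Imp p (fdisj q r)))"
| Q8a: "axiom (Imp (fdisj p (fdisj q r)) (fdisj (fdisj p q) r))"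
| Q8b: "axiom (Imp (fdisj (fdisj p q) r) (fdisj p (fdisj q r)))"
| Q9:  "axiom (Imp (Imp (Imp p One) (Imp (Imp q One) r))
                   (Imp (Imp q One) (Imp (Imp p One) r)))"
| Q10: "axiom (Imp p One)"

inductive provable :: "'v form \<Rightarrow> bool" where
  ax:    "axiom p \<Longrightarrow> provable p"
| qMP:   "provable (Imp (Imp r r) p) \<Longrightarrow> provable (Imp (Imp r r) (Imp p q))
            \<Longrightarrow> provable (Imp (Imp r r) q)"
| Reg:   "provable p \<Longrightarrow> provable (Imp (Imp r r) p)"
| AReg1: "provable (Imp (Imp r r) (Imp p q)) \<Longrightarrow> provable (Imp p q)"
| AReg2: "provable (Imp (Imp r r) (Neg (Imp p q))) \<Longrightarrow> provable (Neg (Imp p q))"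
| AReg3: "provable (Imp (Imp r r) (Neg One)) \<Longrightarrow> provable (Neg One)"
| AReg4: "provable (Imp (Imp r r) One) \<Longrightarrow> provable One"
| Inv1:  "provable p \<Longrightarrow> provable (Neg (Neg p))"
| Inv2:  "provable (Neg (Neg p)) \<Longrightarrow> provable p"
| Flat:  "provable p \<Longrightarrow> provable (Neg One) \<Longrightarrow> provable (Neg p)"
| R2':   "provable (Imp p q) \<Longrightarrow> provable (Imp r t) \<Longrightarrow> provable (Imp (Imp q r) (Imp p t))"
| R3':   "provable (Imp (Imp r r) p) \<Longrightarrow> provable (fminus p)"

record 'a qw_alg =
  carrier :: "'a set"
  imp :: "'a \<Rightarrow> 'a \<Rightarrow> 'a"
  neg :: "'a \<Rightarrow> 'a"
  pl  :: "'a \<Rightarrow> 'a"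
  mi  :: "'a \<Rightarrow> 'a"
  one :: "'a"

definition alg_join :: "('a, 'b) qw_alg_scheme \<Rightarrow> 'a \<Rightarrow> 'a \<Rightarrow> 'a" where
  "alg_join W x y =
     imp W (imp W (pl W (imp W (pl W x) (pl W y))) (mi W (neg W x)))
           (imp W (mi W (imp W (mi W y) (mi W x))) (mi W x))"

definition qw_star :: "('a, 'b) qw_alg_scheme \<Rightarrow> bool" where
  "qw_star W \<longleftrightarrow>
     one W \<in> carrier W \<and>
     (\<forall>x\<in>carrier W. \<forall>y\<in>carrier W. imp W x y \<in> carrier W) \<and>
     (\<forall>x\<in>carrier W. neg W x \<in> carrier W \<and> pl W x \<in> carrier W \<and> mi W x \<in> carrier W) \<and>
     (\<forall>x\<in>carrier W. \<forall>y\<in>carrier W. \<forall>z\<in>carrier W.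
        imp W x y = imp W (neg W y) (neg W x) \<and>
        imp W (imp W x (one W)) (imp W (imp W y (one W)) z)
          = imp W (imp W y (one W)) (imp W (imp W x (one W)) z) \<and>
        imp W (imp W (one W) x) (one W) = one W \<and>
        imp W (imp W z z) (imp W x y) = imp W x y \<and>
        imp W (imp W (one W) (one W)) (pl W x) = pl W (imp W (imp W (one W) (one W)) x) \<and>
        pl W (imp W (imp W (one W) (one W)) x) = imp W (imp W x (one W)) (one W) \<and>
        imp W (imp W (one W) (one W)) (mi W x) = mi W (imp W (imp W (one W) (one W)) x) \<and>
        mi W (imp W (imp W (one W) (one W)) x)
          = imp W (imp W x (neg W (one W))) (neg W (one W)) \<and>
        imp W x y = imp W (imp W (pl W y) (mi W x)) (imp W (pl W x) (mi W y)) \<and>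
        neg W (imp W x y) = imp W y x \<and>
        neg W (neg W x) = x \<and>
        pl W (imp W x (imp W (neg W x) y))
          = imp W (pl W x) (imp W (neg W (pl W x)) (pl W y)) \<and>
        alg_join W x y = alg_join W y x \<and>
        alg_join W x (alg_join W y z) = alg_join W (alg_join W x y) z \<and>
        imp W x (alg_join W y z) = alg_join W (imp W x y) (imp W x z))"

definition sqw_star :: "('a, 'b) qw_alg_scheme \<Rightarrow> bool" where
  "sqw_star W \<longleftrightarrow> qw_star W \<and>
     (\<forall>x\<in>carrier W. pl W x = imp W (imp W (one W) (one W)) (pl W x) \<and>
                     mi W x = imp W (imp W (one W) (one W)) (mi W x))"

definition designated :: "('a, 'b) qw_alg_scheme \<Rightarrow> 'a \<Rightarrow> bool" where
  "designated W d \<longleftrightarrow> (\<exists>c\<in>carrier W. d = imp W (imp W c (one W)) (one W))"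

primrec eval :: "('a, 'b) qw_alg_scheme \<Rightarrow> ('v \<Rightarrow> 'a) \<Rightarrow> 'v form \<Rightarrow> 'a" where
  "eval W v (Var x) = v x"
| "eval W v One = one W"
| "eval W v (Imp p q) = imp W (eval W v p) (eval W v q)"
| "eval W v (Neg p) = neg W (eval W v p)"

definition valid_in :: "'a itself \<Rightarrow> 'v form \<Rightarrow> bool" where
  "valid_in (T :: 'a itself) q \<longleftrightarrow>
     (\<forall>(W :: 'a qw_alg) (v :: 'v \<Rightarrow> 'a).
        sqw_star W \<longrightarrow> range v \<subseteq> carrier W \<longrightarrow> designated W (eval W v q))"

end

theory Submission
  imports Defs
begin

(*
  Extending the operations of a strong quasi-Wajsberg* algebra from the carrier to the
  whole type gives an algebra satisfying the defining identities everywhere. In it the designated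
  elements are the fixed points of x \<mapsto> x\<^sup>+, and an implication is designated iff its
  x\<^sup>- is 1 \<rightarrow> 1. The central identity is absorption: if x \<rightarrow> y is designated, then
  x \<or> y = (1 \<rightarrow> 1) \<rightarrow> y. Together with distributivity of \<rightarrow> over \<or> it makes designated
  implications transitive and monotone, which is what the rules qMP and R2' need; every axiom
  evaluates to 1 \<rightarrow> 1 or to a designated x \<rightarrow> 1.

  The Lindenbaum algebra of interderivability classes, copied into 'a along the
  injection, is a strong quasi-Wajsberg* algebra in which the class of q is designated iff q is
  interderivable with some c\<^sup>+. Since c\<^sup>+ is an axiom, (1 \<rightarrow> 1) \<rightarrow> q is then provable, and
  the rules AReg1-4 and Inv1 remove the prefix unless q has the form \<not>...\<not>x. Such q fail in the
  two-element algebra in which every implication is false and negation is the identity.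
*)

section \<open>Strong quasi-Wajsberg* algebras on a whole type\<close>

locale qw_signature =
  fixes imp_op :: "'a \<Rightarrow> 'a \<Rightarrow> 'a" (infixr "\<rightarrow>" 60)
    and neg_op :: "'a \<Rightarrow> 'a" ("\<sim>_" [80] 80)
    and one_op :: 'a ("\<one>")
begin

text \<open>Designated elements
  \<open>(c \<rightarrow> 1) \<rightarrow> 1 = up c\<close> are, as \<open>up\<close> turns out to be idempotent, exactly the fixed points of \<open>up\<close>.\<close>

definition e :: 'a where "e = \<one> \<rightarrow> \<one>"
definition up :: "'a \<Rightarrow> 'a" where "up x = (x \<rightarrow> \<one>) \<rightarrow> \<one>"
definition down :: "'a \<Rightarrow> 'a" where "down x = (x \<rightarrow> \<sim>\<one>) \<rightarrow> \<sim>\<one>"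
definition join :: "'a \<Rightarrow> 'a \<Rightarrow> 'a" (infixl "\<curlyvee>" 65) where
  "x \<curlyvee> y = (up (up x \<rightarrow> up y) \<rightarrow> down (\<sim>x)) \<rightarrow> (down (down y \<rightarrow> down x) \<rightarrow> down x)"
definition desig :: "'a \<Rightarrow> bool" where "desig x \<longleftrightarrow> up x = x"

definition total_alg :: "'a qw_alg" where
  "total_alg = \<lparr>carrier = UNIV, imp = imp_op, neg = neg_op, pl = up, mi = down, one = one_op\<rparr>"

lemma total_alg_simps [simp]:
  "imp total_alg = imp_op" "neg total_alg = neg_op" "one total_alg = one_op"
  by (simp_all add: total_alg_def)

lemma eval_total_alg_connectives [simp]:
  "eval total_alg v (fplus a) = up (eval total_alg v a)"
  "eval total_alg v (fminus a) = down (eval total_alg v a)"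
  "eval total_alg v (fdisj a b) = eval total_alg v a \<curlyvee> eval total_alg v b"
  by (simp_all add: fplus_def fminus_def fdisj_def up_def down_def join_def)

end

locale sqw_algebra = qw_signature +
  assumes contrapos: "x \<rightarrow> y = \<sim>y \<rightarrow> \<sim>x"
    and exchange: "(x \<rightarrow> \<one>) \<rightarrow> ((y \<rightarrow> \<one>) \<rightarrow> z) = (y \<rightarrow> \<one>) \<rightarrow> ((x \<rightarrow> \<one>) \<rightarrow> z)"
    and one_imp_imp_one: "(\<one> \<rightarrow> x) \<rightarrow> \<one> = \<one>"
    and self_imp_imp: "(z \<rightarrow> z) \<rightarrow> (x \<rightarrow> y) = x \<rightarrow> y"
    and e_imp_up: "e \<rightarrow> up x = up x"
    and up_e_imp: "up (e \<rightarrow> x) = up x"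
    and e_imp_down: "e \<rightarrow> down x = down x"
    and down_e_imp: "down (e \<rightarrow> x) = down x"
    and imp_decomp: "x \<rightarrow> y = (up y \<rightarrow> down x) \<rightarrow> (up x \<rightarrow> down y)"
    and neg_imp: "\<sim>(x \<rightarrow> y) = y \<rightarrow> x"
    and neg_neg: "\<sim>\<sim>x = x"
    and up_imp_neg_imp: "up (x \<rightarrow> (\<sim>x \<rightarrow> y)) = up x \<rightarrow> (\<sim>up x \<rightarrow> up y)"
    and join_comm: "x \<curlyvee> y = y \<curlyvee> x"
    and join_assoc: "x \<curlyvee> (y \<curlyvee> z) = (x \<curlyvee> y) \<curlyvee> z"
    and imp_join: "x \<rightarrow> (y \<curlyvee> z) = (x \<rightarrow> y) \<curlyvee> (x \<rightarrow> z)"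
begin

lemma contrapos_neg_right: "x \<rightarrow> \<sim>y = y \<rightarrow> \<sim>x"
  by (metis contrapos neg_neg)

lemma contrapos_neg_left: "\<sim>x \<rightarrow> y = \<sim>y \<rightarrow> x"
  by (metis contrapos neg_neg)

lemma e_imp_imp: "e \<rightarrow> (x \<rightarrow> y) = x \<rightarrow> y"
  unfolding e_def by (rule self_imp_imp)

lemma neg_e: "\<sim>e = e"
  unfolding e_def by (rule neg_imp)

lemma imp_self: "x \<rightarrow> x = e"
proof -
  have "e \<rightarrow> (x \<rightarrow> x) = \<sim>((x \<rightarrow> x) \<rightarrow> e)" by (simp add: neg_imp)
  also have "(x \<rightarrow> x) \<rightarrow> e = e" unfolding e_def by (rule self_imp_imp)
  finally show ?thesis by (simp add: e_imp_imp neg_e)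
qed

lemma e_imp_one: "e \<rightarrow> \<one> = \<one>"
  unfolding e_def by (rule one_imp_imp_one)

lemma neg_one: "\<sim>\<one> = \<one> \<rightarrow> e"
  by (metis e_imp_one neg_imp)

lemma one_imp_one_imp: "\<one> \<rightarrow> (\<one> \<rightarrow> x) = \<sim>\<one>"
  by (metis neg_imp one_imp_imp_one)

lemma up_alt: "up x = \<sim>\<one> \<rightarrow> (\<one> \<rightarrow> x)"
  by (metis contrapos neg_imp up_def)

lemma down_alt: "down x = \<one> \<rightarrow> (\<sim>\<one> \<rightarrow> x)"
  by (metis contrapos_neg_right neg_imp down_def)

lemma down_eq_neg_up_neg: "down x = \<sim>up (\<sim>x)"
  by (metis down_alt up_alt neg_imp contrapos_neg_right contrapos_neg_left)

lemma up_eq_neg_down_neg: "up x = \<sim>down (\<sim>x)"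
  by (metis down_eq_neg_up_neg neg_neg)

lemma down_neg: "down (\<sim>x) = \<sim>up x"
  by (metis down_eq_neg_up_neg neg_neg)

lemma up_neg: "up (\<sim>x) = \<sim>down x"
  by (metis up_eq_neg_down_neg neg_neg)

lemma imp_e_imp_right: "x \<rightarrow> (e \<rightarrow> y) = x \<rightarrow> y"
  by (metis imp_decomp up_e_imp down_e_imp)

lemma imp_e_imp_left: "(e \<rightarrow> x) \<rightarrow> y = x \<rightarrow> y"
  by (metis imp_decomp up_e_imp down_e_imp)

lemma up_one_imp: "up (\<one> \<rightarrow> x) = e"
  unfolding up_def e_def by (simp add: one_imp_imp_one)

lemma up_e: "up e = e"
  by (simp add: up_def e_imp_one flip: e_def)

lemma up_one: "up \<one> = \<one>"
  unfolding up_def by (simp add: e_imp_one flip: e_def)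

lemma down_e: "down e = e"
  by (simp add: down_eq_neg_up_neg neg_e up_e)

lemma down_one: "down \<one> = e"
  by (simp add: down_eq_neg_up_neg neg_one up_one_imp neg_e)

lemma up_down: "up (down x) = e"
  by (simp add: up_alt down_alt one_imp_one_imp imp_self)

lemma neg_up: "\<sim>up x = \<one> \<rightarrow> (x \<rightarrow> \<one>)"
  by (simp add: up_def neg_imp)

lemma imp_e: "x \<rightarrow> e = e \<rightarrow> \<sim>x"
  by (metis contrapos neg_e)

lemma up_imp_e: "up x \<rightarrow> e = \<sim>up x"
  by (simp add: imp_e neg_up e_imp_imp)

lemma up_imp_one: "up (x \<rightarrow> \<one>) = x \<rightarrow> \<one>"
proof -
  have "x \<rightarrow> \<one> = (\<one> \<rightarrow> down x) \<rightarrow> (up x \<rightarrow> e)"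
    using imp_decomp[of x \<one>] by (simp add: up_one down_one)
  also have "\<dots> = \<sim>\<one> \<rightarrow> \<sim>up x"
    by (simp add: down_alt one_imp_one_imp up_imp_e)
  also have "\<dots> = up (x \<rightarrow> \<one>)"
    by (metis up_alt neg_up)
  finally show ?thesis ..
qed

lemma up_up: "up (up x) = up x"
  by (metis up_def up_imp_one)

lemma down_down: "down (down x) = down x"
  by (metis down_eq_neg_up_neg neg_neg up_up)

lemma down_up: "down (up x) = e"
  by (metis down_eq_neg_up_neg up_eq_neg_down_neg neg_neg up_down neg_e)

lemma e_imp_eq: "e \<rightarrow> x = down (\<sim>x) \<rightarrow> down x"
proof -
  have "e \<rightarrow> x = (up x \<rightarrow> e) \<rightarrow> (e \<rightarrow> down x)"
    using imp_decomp[of e x] by (simp add: up_e down_e)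
  also have "\<dots> = down (\<sim>x) \<rightarrow> down x"
    by (simp add: up_imp_e e_imp_down down_neg)
  finally show ?thesis .
qed

lemma e_imp_join: "e \<rightarrow> (x \<curlyvee> y) = x \<curlyvee> y"
  unfolding join_def by (rule e_imp_imp)

lemma join_e: "x \<curlyvee> e = up x"
proof -
  have "x \<curlyvee> e = (up (\<sim>up x) \<rightarrow> down (\<sim>x)) \<rightarrow> e"
    by (simp add: join_def up_e down_e e_imp_down down_down imp_self up_imp_e)
  also have "\<dots> = down (\<sim>x) \<rightarrow> e"
    by (simp add: up_neg down_up neg_e e_imp_down)
  also have "\<dots> = up x"
    by (simp add: imp_e down_neg neg_neg e_imp_up)
  finally show ?thesis .
qed

lemma e_join: "e \<curlyvee> x = up x"
  by (simp add: join_comm join_e)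

lemma up_neg_one: "up (\<sim>\<one>) = e"
  by (simp add: neg_one up_one_imp)

lemma join_neg_one: "x \<curlyvee> \<sim>\<one> = e \<rightarrow> x"
proof -
  note up_neg_one
  moreover have "down (\<sim>\<one>) = \<sim>\<one>" by (simp add: down_neg up_one)
  ultimately have "x \<curlyvee> \<sim>\<one> = (up (up x \<rightarrow> e) \<rightarrow> down (\<sim>x)) \<rightarrow> (down (\<sim>\<one> \<rightarrow> down x) \<rightarrow> down x)"
    by (simp add: join_def)
  also have "down (\<sim>\<one> \<rightarrow> down x) = e"
    by (metis down_eq_neg_up_neg neg_imp contrapos_neg_right up_one_imp neg_e)
  also have "up (up x \<rightarrow> e) = e"
    by (simp add: up_imp_e up_neg down_up neg_e)
  finally show ?thesis
    by (simp add: imp_e_imp_left imp_e_imp_right flip: e_imp_eq)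
qed

lemma join_e_imp: "x \<curlyvee> (e \<rightarrow> y) = x \<curlyvee> y"
  by (metis join_neg_one join_assoc e_imp_join)

lemma join_up: "x \<curlyvee> up y = up (x \<curlyvee> y)"
  by (metis join_e join_assoc)

lemma up_join: "up x \<curlyvee> y = up (x \<curlyvee> y)"
  by (metis join_up join_comm)

lemma neg_join_imp: "\<sim>x \<curlyvee> (x \<rightarrow> y) = x \<rightarrow> up y"
proof -
  have "x \<rightarrow> up y = (x \<rightarrow> y) \<curlyvee> (e \<rightarrow> \<sim>x)"
    by (simp flip: join_e imp_e add: imp_join)
  then show ?thesis
    by (simp add: join_e_imp join_comm)
qed

lemma up_neg_eq_imp_up: "up (\<sim>x) = x \<rightarrow> up x"
  by (metis neg_join_imp imp_self join_e)

lemma up_eq_down_imp: "up x = down x \<rightarrow> x"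
  by (metis up_neg_eq_imp_up up_neg neg_neg contrapos)

lemma join_imp_right: "x \<curlyvee> (y \<rightarrow> x) = down y \<rightarrow> x"
  by (metis neg_join_imp neg_neg contrapos up_neg)

lemma up_down_join: "up (down x \<curlyvee> y) = up y"
  by (simp flip: up_join add: up_down e_join)

lemma down_imp_down_right: "down (down x \<rightarrow> down y) = down (down x \<rightarrow> y)"
proof -
  have "up (down y \<rightarrow> down x) = up (y \<rightarrow> down x)"
    by (metis join_imp_right up_down_join)
  then show ?thesis
    by (metis down_eq_neg_up_neg neg_imp)
qed

lemma desig_up: "desig (up x)"
  by (simp add: desig_def up_up)

lemma desig_e: "desig e"
  by (simp add: desig_def up_e)

lemma desig_imp_one: "desig (x \<rightarrow> \<one>)"
  by (simp add: desig_def up_imp_one)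

lemma desig_down_eq_e: "desig x \<Longrightarrow> down x = e"
  by (metis desig_def down_up)

lemma desig_e_imp: "desig x \<Longrightarrow> e \<rightarrow> x = x"
  by (metis desig_def e_imp_up)

lemma desig_imp_iff: "desig (x \<rightarrow> y) \<longleftrightarrow> down (x \<rightarrow> y) = e"
  by (metis desig_down_eq_e desig_def up_eq_down_imp e_imp_imp)

lemma desig_join: "desig x \<Longrightarrow> desig (x \<curlyvee> y)"
  by (metis desig_def up_join)

lemma desig_imp_join: "desig (x \<rightarrow> y) \<Longrightarrow> desig (x \<rightarrow> y \<curlyvee> z)"
  by (simp add: imp_join desig_join)

lemma desig_imp_up: "desig (x \<rightarrow> y) \<Longrightarrow> desig (x \<rightarrow> up y)"
  by (metis desig_imp_join join_e)

lemma desig_up_mono: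
  assumes "desig (x \<rightarrow> y)"
  shows "desig (up x \<rightarrow> up y)"
proof -
  have "down (x \<rightarrow> up y) = e"
    using assms by (intro desig_down_eq_e desig_imp_up)
  then have "up (up y \<rightarrow> x) = e"
    by (metis up_eq_neg_down_neg neg_imp neg_e)
  then have "up (up y \<rightarrow> up x) = e"
    by (metis neg_join_imp join_up join_e up_neg down_up neg_e)
  then show ?thesis
    by (metis desig_imp_iff down_eq_neg_up_neg neg_imp neg_e)
qed

lemma desig_down_mono:
  assumes "desig (x \<rightarrow> y)"
  shows "desig (down x \<rightarrow> down y)"
proof -
  have "desig (y \<curlyvee> (x \<rightarrow> y))"
    using assms by (metis desig_join join_comm)
  then have "down (down x \<rightarrow> y) = e"
    by (simp add: join_imp_right desig_down_eq_e)
  then show ?thesis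
    by (simp add: desig_imp_iff down_imp_down_right)
qed

lemma join_absorb:
  assumes "desig (x \<rightarrow> y)"
  shows "x \<curlyvee> y = e \<rightarrow> y"
proof -
  have "up (up y \<rightarrow> up x) = e"
    using desig_up_mono[OF assms] by (metis desig_imp_iff up_eq_neg_down_neg neg_imp neg_e)
  moreover have "down (down x \<rightarrow> down y) = e"
    using desig_down_mono[OF assms] by (simp add: desig_imp_iff)
  ultimately have "x \<curlyvee> y = (e \<rightarrow> down (\<sim>y)) \<rightarrow> (e \<rightarrow> down y)"
    unfolding join_comm[of x y] by (simp add: join_def)
  then show ?thesis
    by (simp add: imp_e_imp_left imp_e_imp_right flip: e_imp_eq)
qed

lemma desig_trans: "desig (x \<rightarrow> y) \<Longrightarrow> desig (y \<rightarrow> z) \<Longrightarrow> desig (x \<rightarrow> z)"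
  by (metis desig_imp_join join_absorb imp_e_imp_right)

lemma desig_imp_mono_right:
  assumes "desig (y \<rightarrow> z)"
  shows "desig ((x \<rightarrow> y) \<rightarrow> (x \<rightarrow> z))"
proof -
  have "x \<rightarrow> z = (x \<rightarrow> y) \<curlyvee> (x \<rightarrow> z)"
    by (metis join_absorb[OF assms] imp_e_imp_right imp_join)
  then have "(x \<rightarrow> y) \<rightarrow> (x \<rightarrow> z) = up ((x \<rightarrow> y) \<rightarrow> (x \<rightarrow> z))"
    by (metis imp_join imp_self e_join)
  then show ?thesis
    by (metis desig_up)
qed

lemma desig_imp_mono_left: "desig (x \<rightarrow> y) \<Longrightarrow> desig ((y \<rightarrow> z) \<rightarrow> (x \<rightarrow> z))"
  by (metis desig_imp_mono_right contrapos)

lemma desig_imp_mono: "desig (x \<rightarrow> y) \<Longrightarrow> desig (z \<rightarrow> w) \<Longrightarrow> desig ((y \<rightarrow> z) \<rightarrow> (x \<rightarrow> w))"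
  by (metis desig_imp_mono_left desig_imp_mono_right desig_trans)

lemma desig_neg_of_desig_neg_one:
  assumes "desig (\<sim>\<one>)" and "desig x"
  shows "desig (\<sim>x)"
proof -
  have "\<one> = e"
    using assms(1) by (metis desig_def up_neg_one neg_neg neg_e)
  then have "up y = e" for y
    by (metis up_e_imp up_one_imp)
  then show ?thesis
    using assms(2) by (metis desig_def neg_e)
qed

lemma desig_down: "desig (e \<rightarrow> x) \<Longrightarrow> desig (down x)"
  by (metis desig_def up_e_imp down_e_imp down_up up_e)

section \<open>Soundness\<close>

lemma axiom_desig: "axiom q \<Longrightarrow> desig (eval total_alg v q)"
proof (induction rule: axiom.induct)
  case (Q1a p q) show ?case by (simp add: imp_self desig_e flip: contrapos)
next
  case (Q1b p q) show ?case by (simp add: imp_self desig_e flip: contrapos)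
next
  case (Q2a p) show ?case by (simp add: one_imp_imp_one imp_self desig_e)
next
  case (Q2b p) show ?case by (simp add: one_imp_imp_one imp_self desig_e)
next
  case (Q3a p q) show ?case by (simp add: imp_e_imp_right imp_self desig_e)
next
  case (Q3b q p) show ?case by (simp add: imp_e_imp_left imp_self desig_e)
next
  case (Q4a p q) show ?case by (simp add: imp_self desig_e flip: imp_decomp)
next
  case (Q4b p q) show ?case by (simp add: imp_self desig_e flip: imp_decomp)
next
  case (Q5a p q) show ?case by (simp add: neg_imp imp_self desig_e)
next
  case (Q5b q p) show ?case by (simp add: neg_imp imp_self desig_e)
next
  case (Q6a p q) show ?case by (simp add: up_imp_neg_imp imp_self desig_e)
next
  case (Q6b p q) show ?case by (simp add: up_imp_neg_imp imp_self desig_e)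
next
  case (Q7a p q r) show ?case by (simp add: imp_join join_comm imp_self desig_e)
next
  case (Q7b p r q) show ?case by (simp add: imp_join join_comm imp_self desig_e)
next
  case (Q8a p q r) show ?case by (simp add: join_assoc imp_self desig_e)
next
  case (Q8b p q r) show ?case by (simp add: join_assoc imp_self desig_e)
next
  case (Q9 p q r) show ?case by (simp add: exchange imp_self desig_e)
next
  case (Q10 p) show ?case by (simp add: desig_imp_one)
qed

lemma provable_desig: "provable q \<Longrightarrow> desig (eval total_alg v q)"
proof (induction rule: provable.induct)
  case (ax q)
  then show ?case by (rule axiom_desig)
next
  case (qMP r p q)
  then show ?case by (simp add: imp_self e_imp_imp) (metis desig_trans)
next
  case (Reg p r)
  then show ?case by (simp add: imp_self desig_e_imp)
next
  case (AReg1 r p q)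
  then show ?case by (simp add: imp_self e_imp_imp)
next
  case (AReg2 r p q)
  then show ?case by (simp add: imp_self neg_imp e_imp_imp)
next
  case (AReg3 r)
  then show ?case by (simp add: imp_self neg_one e_imp_imp)
next
  case (AReg4 r)
  then show ?case by (simp add: imp_self e_imp_one)
next
  case (Inv1 p)
  then show ?case by (simp add: neg_neg)
next
  case (Inv2 p)
  then show ?case by (simp add: neg_neg)
next
  case (Flat p)
  then show ?case by (simp add: desig_neg_of_desig_neg_one)
next
  case (R2' p q r t)
  then show ?case by (simp add: desig_imp_mono)
next
  case (R3' r p)
  then show ?case by (simp add: imp_self desig_down)
qed

end

text \<open>Outside the carrier, negation is the identity and implication first moves its arguments
  to \<open>1 \<rightarrow> 1\<close>, a fixed point of negation; so the total operations satisfy all identities.\<close>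

definition retract :: "('a, 'b) qw_alg_scheme \<Rightarrow> 'a \<Rightarrow> 'a" where
  "retract W x = (if x \<in> carrier W then x else imp W (one W) (one W))"

definition total_imp :: "('a, 'b) qw_alg_scheme \<Rightarrow> 'a \<Rightarrow> 'a \<Rightarrow> 'a" where
  "total_imp W x y = imp W (retract W x) (retract W y)"

definition total_neg :: "('a, 'b) qw_alg_scheme \<Rightarrow> 'a \<Rightarrow> 'a" where
  "total_neg W x = (if x \<in> carrier W then neg W x else x)"

context
  fixes W :: "('a, 'b) qw_alg_scheme"
  assumes sqw: "sqw_star W"
begin

private abbreviation (input) C where "C \<equiv> carrier W"

lemma sqw_star_closed:
  "one W \<in> C" "x \<in> C \<Longrightarrow> y \<in> C \<Longrightarrow> imp W x y \<in> C" "x \<in> C \<Longrightarrow> neg W x \<in> C"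
  "x \<in> C \<Longrightarrow> pl W x \<in> C" "x \<in> C \<Longrightarrow> mi W x \<in> C"
  using sqw unfolding sqw_star_def qw_star_def by blast+

lemma alg_join_in_carrier: "x \<in> C \<Longrightarrow> y \<in> C \<Longrightarrow> alg_join W x y \<in> C"
  by (simp add: alg_join_def sqw_star_closed)

lemma sqw_star_identities:
    "\<lbrakk>x \<in> C; y \<in> C\<rbrakk> \<Longrightarrow> imp W x y = imp W (neg W y) (neg W x)"
    "\<lbrakk>x \<in> C; y \<in> C; z \<in> C\<rbrakk> \<Longrightarrow> imp W (imp W x (one W)) (imp W (imp W y (one W)) z)
       = imp W (imp W y (one W)) (imp W (imp W x (one W)) z)"
    "x \<in> C \<Longrightarrow> imp W (imp W (one W) x) (one W) = one W"
    "\<lbrakk>x \<in> C; y \<in> C; z \<in> C\<rbrakk> \<Longrightarrow> imp W (imp W z z) (imp W x y) = imp W x y"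
    "x \<in> C \<Longrightarrow> pl W x = imp W (imp W x (one W)) (one W)"
    "x \<in> C \<Longrightarrow> pl W (imp W (imp W (one W) (one W)) x) = pl W x"
    "x \<in> C \<Longrightarrow> imp W (imp W (one W) (one W)) (pl W x) = pl W x"
    "x \<in> C \<Longrightarrow> mi W x = imp W (imp W x (neg W (one W))) (neg W (one W))"
    "x \<in> C \<Longrightarrow> mi W (imp W (imp W (one W) (one W)) x) = mi W x"
    "x \<in> C \<Longrightarrow> imp W (imp W (one W) (one W)) (mi W x) = mi W x"
    "\<lbrakk>x \<in> C; y \<in> C\<rbrakk> \<Longrightarrow> imp W x y = imp W (imp W (pl W y) (mi W x)) (imp W (pl W x) (mi W y))"
    "\<lbrakk>x \<in> C; y \<in> C\<rbrakk> \<Longrightarrow> neg W (imp W x y) = imp W y x"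
    "x \<in> C \<Longrightarrow> neg W (neg W x) = x"
    "\<lbrakk>x \<in> C; y \<in> C\<rbrakk> \<Longrightarrow>
       pl W (imp W x (imp W (neg W x) y)) = imp W (pl W x) (imp W (neg W (pl W x)) (pl W y))"
    "\<lbrakk>x \<in> C; y \<in> C\<rbrakk> \<Longrightarrow> alg_join W x y = alg_join W y x"
    "\<lbrakk>x \<in> C; y \<in> C; z \<in> C\<rbrakk> \<Longrightarrow> alg_join W x (alg_join W y z) = alg_join W (alg_join W x y) z"
    "\<lbrakk>x \<in> C; y \<in> C; z \<in> C\<rbrakk> \<Longrightarrow> imp W x (alg_join W y z) = alg_join W (imp W x y) (imp W x z)"
  using sqw unfolding sqw_star_def qw_star_def by metis+

lemma retract_in_carrier [simp]: "retract W x \<in> C"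
  by (simp add: retract_def sqw_star_closed)

lemma retract_of_carrier [simp]: "x \<in> C \<Longrightarrow> retract W x = x"
  by (simp add: retract_def)

lemma total_neg_of_carrier [simp]: "x \<in> C \<Longrightarrow> total_neg W x = neg W x"
  by (simp add: total_neg_def)

lemma retract_total_neg [simp]: "retract W (total_neg W x) = neg W (retract W x)"
  by (simp add: retract_def total_neg_def sqw_star_closed sqw_star_identities(12))

lemma total_e: "qw_signature.e (total_imp W) (one W) = imp W (one W) (one W)"
  by (simp add: qw_signature.e_def total_imp_def sqw_star_closed)

lemma total_up: "qw_signature.up (total_imp W) (one W) x = pl W (retract W x)"
  by (simp add: qw_signature.up_def total_imp_def sqw_star_closed sqw_star_identities(5))

lemma total_down: "qw_signature.down (total_imp W) (total_neg W) (one W) x = mi W (retract W x)"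
  by (simp add: qw_signature.down_def total_imp_def total_neg_def sqw_star_closed
      sqw_star_identities(8))

lemma total_join:
  "qw_signature.join (total_imp W) (total_neg W) (one W) x y = alg_join W (retract W x) (retract W y)"
  by (simp add: qw_signature.join_def alg_join_def total_up total_down total_imp_def sqw_star_closed)

lemma sqw_algebra_total: "sqw_algebra (total_imp W) (total_neg W) (one W)"
proof
  fix x y z
  let ?I = "total_imp W" and ?N = "total_neg W" and ?e = "qw_signature.e (total_imp W) (one W)"
    and ?up = "qw_signature.up (total_imp W) (one W)"
    and ?down = "qw_signature.down (total_imp W) (total_neg W) (one W)"
    and ?join = "qw_signature.join (total_imp W) (total_neg W) (one W)"
  show "?I x y = ?I (?N y) (?N x)"
    using sqw_star_identities(1)[of "retract W x" "retract W y"] by (simp add: total_imp_def)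
  show "?I (?I x (one W)) (?I (?I y (one W)) z) = ?I (?I y (one W)) (?I (?I x (one W)) z)"
    by (simp add: total_imp_def sqw_star_closed sqw_star_identities(2))
  show "?I (?I (one W) x) (one W) = one W"
    by (simp add: total_imp_def sqw_star_closed sqw_star_identities(3))
  show "?I (?I z z) (?I x y) = ?I x y"
    by (simp add: total_imp_def sqw_star_closed sqw_star_identities(4))
  show "?I ?e (?up x) = ?up x"
    by (simp add: total_imp_def total_e total_up sqw_star_closed sqw_star_identities(7))
  show "?up (?I ?e x) = ?up x"
    by (simp add: total_imp_def total_e total_up sqw_star_closed sqw_star_identities(6))
  show "?I ?e (?down x) = ?down x"
    by (simp add: total_imp_def total_e total_down sqw_star_closed sqw_star_identities(10))
  show "?down (?I ?e x) = ?down x"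
    by (simp add: total_imp_def total_e total_down sqw_star_closed sqw_star_identities(9))
  show "?I x y = ?I (?I (?up y) (?down x)) (?I (?up x) (?down y))"
    using sqw_star_identities(11)[of "retract W x" "retract W y"]
    by (simp add: total_imp_def total_up total_down sqw_star_closed)
  show "?N (?I x y) = ?I y x"
    by (simp add: total_imp_def total_neg_def sqw_star_closed sqw_star_identities(12))
  show "?N (?N x) = x"
    by (simp add: total_neg_def sqw_star_closed sqw_star_identities(13))
  show "?up (?I x (?I (?N x) y)) = ?I (?up x) (?I (?N (?up x)) (?up y))"
    by (simp add: total_imp_def total_up sqw_star_closed sqw_star_identities(14))
  show "?join x y = ?join y x"
    by (simp add: total_join sqw_star_identities(15))
  show "?join x (?join y z) = ?join (?join x y) z"
    by (simp add: total_join alg_join_in_carrier sqw_star_identities(16))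
  show "?I x (?join y z) = ?join (?I x y) (?I x z)"
    by (simp add: total_join total_imp_def sqw_star_closed alg_join_in_carrier sqw_star_identities(17))
qed

lemma eval_in_carrier: "range v \<subseteq> C \<Longrightarrow> eval W v q \<in> C"
  by (induction q) (auto simp: sqw_star_closed)

lemma eval_total_alg:
  assumes "range v \<subseteq> C"
  shows "eval (qw_signature.total_alg (total_imp W) (total_neg W) (one W)) v q = eval W v q"
  using assms by (induction q) (auto simp: qw_signature.total_alg_simps total_imp_def eval_in_carrier)

theorem provable_designated:
  assumes "provable q" and "range v \<subseteq> C"
  shows "designated W (eval W v q)"
proof -
  interpret sqw_algebra "total_imp W" "total_neg W" "one W"
    by (rule sqw_algebra_total)
  have "desig (eval total_alg v q)"
    using assms(1) by (rule provable_desig)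
  then have "pl W (eval W v q) = eval W v q"
    using assms(2) by (simp add: desig_def eval_total_alg total_up eval_in_carrier)
  then show ?thesis
    unfolding designated_def using assms(2) by (metis eval_in_carrier sqw_star_identities(5))
qed

end

section \<open>The Lindenbaum algebra\<close>

lemma provable_imp_refl: "provable (Imp a a)"
  using provable.ax[OF axiom.Q3b[of a "Imp a a"]] by (rule provable.AReg1)

lemma provable_boxed_mp: "provable a \<Longrightarrow> provable (Imp a b) \<Longrightarrow> provable (Imp (Imp One One) b)"
  by (rule provable.qMP[OF provable.Reg provable.Reg])

lemma provable_mp_imp: "provable a \<Longrightarrow> provable (Imp a (Imp b c)) \<Longrightarrow> provable (Imp b c)"
  by (rule provable.AReg1[OF provable_boxed_mp])

lemma provable_imp_trans: "provable (Imp a b) \<Longrightarrow> provable (Imp b c) \<Longrightarrow> provable (Imp a c)"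
  by (rule provable_mp_imp[OF _ provable.R2'[OF _ provable_imp_refl]])

definition interderivable :: "'v form \<Rightarrow> 'v form \<Rightarrow> bool" where
  "interderivable a b \<longleftrightarrow> provable (Imp a b) \<and> provable (Imp b a)"

lemma interderivable_refl: "interderivable a a"
  by (simp add: interderivable_def provable_imp_refl)

lemma interderivable_sym: "interderivable a b \<Longrightarrow> interderivable b a"
  by (simp add: interderivable_def)

lemma interderivable_trans [trans]:
  "interderivable a b \<Longrightarrow> interderivable b c \<Longrightarrow> interderivable a c"
  unfolding interderivable_def using provable_imp_trans by blast

lemma interderivable_Imp:
  "interderivable a a' \<Longrightarrow> interderivable b b' \<Longrightarrow> interderivable (Imp a b) (Imp a' b')"
  unfolding interderivable_def using provable.R2' by blast

lemma interderivable_Neg: "interderivable a a' \<Longrightarrow> interderivable (Neg a) (Neg a')"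
  unfolding interderivable_def using provable_mp_imp provable.ax[OF axiom.Q1a] by blast

lemma interderivable_fplus: "interderivable a a' \<Longrightarrow> interderivable (fplus a) (fplus a')"
  unfolding fplus_def by (intro interderivable_Imp interderivable_refl)

lemma interderivable_fminus: "interderivable a a' \<Longrightarrow> interderivable (fminus a) (fminus a')"
  unfolding fminus_def by (intro interderivable_Imp interderivable_refl)

lemma interderivable_fdisj:
  "interderivable a a' \<Longrightarrow> interderivable b b' \<Longrightarrow> interderivable (fdisj a b) (fdisj a' b')"
  unfolding fdisj_def
  by (intro interderivable_Imp interderivable_refl interderivable_fplus interderivable_fminus
      interderivable_Neg)

lemma interderivable_of_axioms: "axiom (Imp a b) \<Longrightarrow> axiom (Imp b a) \<Longrightarrow> interderivable a b"
  unfolding interderivable_def using provable.ax by blast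

lemma interderivable_imp_self_imp: "interderivable a (Imp (Imp b b) a)"
  by (rule interderivable_of_axioms[OF axiom.Q3a axiom.Q3b])

lemma interderivable_Neg_Neg: "interderivable (Neg (Neg a)) a"
proof -
  let ?e = "Imp One One :: 'v form"
  have "interderivable (Neg (Neg a)) (Neg (Neg (Imp ?e a)))"
    by (intro interderivable_Neg interderivable_imp_self_imp)
  also have "interderivable \<dots> (Neg (Imp a ?e))"
    by (rule interderivable_Neg[OF interderivable_of_axioms[OF axiom.Q5a axiom.Q5b]])
  also have "interderivable \<dots> (Imp ?e a)"
    by (rule interderivable_of_axioms[OF axiom.Q5a axiom.Q5b])
  also have "interderivable \<dots> a"
    by (rule interderivable_sym[OF interderivable_imp_self_imp])
  finally show ?thesis .
qed

lemma interderivable_fdisj_comm: "interderivable (fdisj a b) (fdisj b a)"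
proof -
  let ?e = "Imp One One :: 'v form"
  have "interderivable (fdisj a b) (Imp ?e (fdisj a b))"
    by (rule interderivable_imp_self_imp)
  also have "interderivable \<dots> (fdisj (Imp ?e b) (Imp ?e a))"
    by (rule interderivable_of_axioms[OF axiom.Q7a axiom.Q7b])
  also have "interderivable \<dots> (fdisj b a)"
    by (intro interderivable_fdisj interderivable_sym[OF interderivable_imp_self_imp])
  finally show ?thesis .
qed

definition lind_class :: "'v form \<Rightarrow> 'v form set" where
  "lind_class a = {b. interderivable a b}"

lemma lind_class_eq_iff: "lind_class a = lind_class b \<longleftrightarrow> interderivable a b"
  unfolding lind_class_def
  by (auto intro: interderivable_refl interderivable_sym interderivable_trans)

lemma interderivable_some_lind_class: "interderivable (SOME b. b \<in> lind_class a) a"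
proof -
  have "a \<in> lind_class a"
    by (simp add: lind_class_def interderivable_refl)
  then have "(SOME b. b \<in> lind_class a) \<in> lind_class a"
    by (rule someI)
  then show ?thesis
    by (simp add: lind_class_def interderivable_sym)
qed

definition lindenbaum :: "'v form set qw_alg" where
  "lindenbaum = \<lparr>carrier = range lind_class,
     imp = \<lambda>X Y. lind_class (Imp (SOME a. a \<in> X) (SOME b. b \<in> Y)),
     neg = \<lambda>X. lind_class (Neg (SOME a. a \<in> X)),
     pl = \<lambda>X. lind_class (fplus (SOME a. a \<in> X)),
     mi = \<lambda>X. lind_class (fminus (SOME a. a \<in> X)),
     one = lind_class One\<rparr>"

lemma lindenbaum_simps [simp]:
  "carrier lindenbaum = range lind_class"
  "imp lindenbaum (lind_class a) (lind_class b) = lind_class (Imp a b)"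
  "neg lindenbaum (lind_class a) = lind_class (Neg a)"
  "pl lindenbaum (lind_class a) = lind_class (fplus a)"
  "mi lindenbaum (lind_class a) = lind_class (fminus a)"
  "one lindenbaum = lind_class One"
  by (simp_all add: lindenbaum_def lind_class_eq_iff interderivable_some_lind_class
      interderivable_Imp interderivable_Neg interderivable_fplus interderivable_fminus)

lemma lindenbaum_join [simp]:
  "alg_join lindenbaum (lind_class a) (lind_class b) = lind_class (fdisj a b)"
  by (simp add: alg_join_def fdisj_def fplus_def fminus_def)

lemma sqw_star_lindenbaum: "sqw_star (lindenbaum :: 'v form set qw_alg)"
proof -
  let ?e = "Imp One One"
  note ax = interderivable_of_axioms
  have drop_prefix: "interderivable (Imp (Imp c c) a) a" for a c :: "'v form"
    by (rule ax[OF axiom.Q3b axiom.Q3a])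
  have identities: "interderivable (Imp a b) (Imp (Neg b) (Neg a))"
    "interderivable (Imp (Imp a One) (Imp (Imp b One) c)) (Imp (Imp b One) (Imp (Imp a One) c))"
    "interderivable (Imp (Imp One a) One) One"
    "interderivable (Imp ?e (fplus a)) (fplus (Imp ?e a))"
    "interderivable (fplus (Imp ?e a)) (fplus a)"
    "interderivable (Imp ?e (fminus a)) (fminus (Imp ?e a))"
    "interderivable (fminus (Imp ?e a)) (fminus a)"
    "interderivable (Imp a b) (Imp (Imp (fplus b) (fminus a)) (Imp (fplus a) (fminus b)))"
    "interderivable (Neg (Imp a b)) (Imp b a)"
    "interderivable (fplus (Imp a (Imp (Neg a) b))) (Imp (fplus a) (Imp (Neg (fplus a)) (fplus b)))"
    "interderivable (fdisj a (fdisj b c)) (fdisj (fdisj a b) c)"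
    "interderivable (Imp a (fdisj b c)) (fdisj (Imp a b) (Imp a c))"
    "interderivable (fplus a) (Imp ?e (fplus a))"
    "interderivable (fminus a) (Imp ?e (fminus a))"
    for a b c :: "'v form"
    by (rule ax[OF axiom.Q1a axiom.Q1b] ax[OF axiom.Q9 axiom.Q9] ax[OF axiom.Q2b axiom.Q2a]
        interderivable_trans[OF drop_prefix interderivable_fplus[OF interderivable_imp_self_imp]]
        interderivable_fplus[OF drop_prefix]
        interderivable_trans[OF drop_prefix interderivable_fminus[OF interderivable_imp_self_imp]]
        interderivable_fminus[OF drop_prefix] ax[OF axiom.Q4a axiom.Q4b] ax[OF axiom.Q5a axiom.Q5b]
        ax[OF axiom.Q6a axiom.Q6b] ax[OF axiom.Q8a axiom.Q8b]
        interderivable_trans[OF ax[OF axiom.Q7a axiom.Q7b] interderivable_fdisj_comm]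
        interderivable_imp_self_imp)+
  show ?thesis
    unfolding sqw_star_def qw_star_def
    by (simp add: rangeI lind_class_eq_iff identities drop_prefix interderivable_Neg_Neg interderivable_fdisj_comm
        flip: fplus_def fminus_def)
qed

lemma eval_lindenbaum: "eval lindenbaum (\<lambda>x. lind_class (Var x)) q = lind_class q"
  by (induction q) simp_all

lemma designated_lindenbaum_iff:
  "designated lindenbaum (lind_class q) \<longleftrightarrow> (\<exists>c. interderivable q (fplus c))"
  unfolding designated_def by (auto simp: lind_class_eq_iff fplus_def)

section \<open>Completeness\<close>

definition image_alg :: "('b \<Rightarrow> 'a) \<Rightarrow> ('b, 'c) qw_alg_scheme \<Rightarrow> 'a qw_alg" where
  "image_alg g W = \<lparr>carrier = g ` carrier W,
     imp = \<lambda>x y. g (imp W (inv g x) (inv g y)),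
     neg = \<lambda>x. g (neg W (inv g x)),
     pl = \<lambda>x. g (pl W (inv g x)),
     mi = \<lambda>x. g (mi W (inv g x)),
     one = g (one W)\<rparr>"

context
  fixes g :: "'b \<Rightarrow> 'a"
  assumes g: "inj g"
begin

lemma image_alg_simps [simp]:
  "carrier (image_alg g W) = g ` carrier W"
  "imp (image_alg g W) (g x) (g y) = g (imp W x y)"
  "neg (image_alg g W) (g x) = g (neg W x)"
  "pl (image_alg g W) (g x) = g (pl W x)"
  "mi (image_alg g W) (g x) = g (mi W x)"
  "one (image_alg g W) = g (one W)"
  by (simp_all add: image_alg_def g)

lemma image_alg_join [simp]: "alg_join (image_alg g W) (g x) (g y) = g (alg_join W x y)"
  by (simp add: alg_join_def)

lemma sqw_star_image_alg_iff: "sqw_star (image_alg g W) \<longleftrightarrow> sqw_star W"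
  unfolding sqw_star_def qw_star_def
  by (simp only: image_alg_simps image_alg_join inj_image_mem_iff[OF g] inj_eq[OF g] ball_simps(9))

lemma eval_image_alg: "eval (image_alg g W) (g \<circ> v) q = g (eval W v q)"
  by (induction q) simp_all

lemma designated_image_alg_iff: "designated (image_alg g W) (g d) \<longleftrightarrow> designated W d"
  unfolding designated_def by (auto simp: inj_eq[OF g])

end

definition degenerate_alg :: "bool qw_alg" where
  "degenerate_alg = \<lparr>carrier = UNIV, imp = \<lambda>_ _. False, neg = id, pl = \<lambda>_. False, mi = \<lambda>_. False,
     one = False\<rparr>"

lemma sqw_star_degenerate_alg: "sqw_star degenerate_alg"
  by (simp add: sqw_star_def qw_star_def degenerate_alg_def alg_join_def)

lemma designated_degenerate_alg_iff: "designated degenerate_alg d \<longleftrightarrow> \<not> d"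
  by (simp add: designated_def degenerate_alg_def)

lemma degenerate_alg_simps [simp]:
  "carrier degenerate_alg = UNIV" "imp degenerate_alg x y = False" "neg degenerate_alg x = x"
  "one degenerate_alg = False"
  by (simp_all add: degenerate_alg_def)

lemma provable_fplus: "provable (fplus c)"
  unfolding fplus_def by (rule provable.ax[OF axiom.Q10])

lemma provable_One: "provable One"
  by (rule provable.AReg4[OF provable.ax[OF axiom.Q10[of "Imp One One"]]])

lemma provable_of_interderivable_fplus:
  assumes "interderivable q (fplus c)" and "\<not> eval degenerate_alg (\<lambda>_. True) q"
  shows "provable q"
  using assms
proof (induction "size q" arbitrary: q rule: less_induct)
  case less
  have boxed: "provable (Imp (Imp One One) q)"
    using less.prems(1) unfolding interderivable_def by (blast intro: provable_boxed_mp[OF provable_fplus])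
  show ?case
  proof (cases q)
    case (Imp a b)
    then show ?thesis using boxed provable.AReg1 by blast
  next
    case One
    then show ?thesis using provable_One by simp
  next
    case (Var x)
    then show ?thesis using less.prems(2) by simp
  next
    case (Neg q')
    show ?thesis
    proof (cases q')
      case (Imp a b)
      then show ?thesis using boxed Neg provable.AReg2 by blast
    next
      case One
      then show ?thesis using boxed Neg provable.AReg3 by blast
    next
      case (Var x)
      then show ?thesis using less.prems(2) Neg by simp
    next
      case (Neg q'')
      have "interderivable q'' (fplus c)"
        using less.prems(1) \<open>q = Neg q'\<close> Neg
        by (metis interderivable_trans interderivable_sym interderivable_Neg_Neg)
      moreover have "\<not> eval degenerate_alg (\<lambda>_. True) q''"
        using less.prems(2) \<open>q = Neg q'\<close> Neg by simp
      ultimately have "provable q''"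
        using less.hyps \<open>q = Neg q'\<close> Neg by simp
      then show ?thesis
        using \<open>q = Neg q'\<close> Neg provable.Inv1 by simp
    qed
  qed
qed

lemma valid_in_designated:
  fixes g :: "'b \<Rightarrow> 'a" and W :: "'b qw_alg"
  assumes "inj g" and "valid_in TYPE('a) q" and "sqw_star W" and "range v \<subseteq> carrier W"
  shows "designated W (eval W v q)"
proof -
  have "sqw_star (image_alg g W)"
    using assms(1,3) by (simp add: sqw_star_image_alg_iff)
  moreover have "range (g \<circ> v) \<subseteq> carrier (image_alg g W)"
    using assms(1,4) by auto
  ultimately have "designated (image_alg g W) (eval (image_alg g W) (g \<circ> v) q)"
    using assms(2) unfolding valid_in_def by blast
  then show ?thesis
    by (simp add: eval_image_alg designated_image_alg_iff assms(1) del: comp_apply)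
qed

theorem valid_in_provable:
  fixes q :: "'v form" and f :: "'v form set \<Rightarrow> 'a"
  assumes f: "inj f" and valid: "valid_in TYPE('a) q"
  shows "provable q"
proof -
  have "designated lindenbaum (eval lindenbaum (\<lambda>x. lind_class (Var x)) q)"
    by (rule valid_in_designated[OF f valid sqw_star_lindenbaum]) auto
  then obtain c where "interderivable q (fplus c)"
    by (auto simp: eval_lindenbaum designated_lindenbaum_iff)
  moreover have "inj (f \<circ> (\<lambda>b. if b then UNIV else {}))"
    using f by (rule inj_compose) (simp add: inj_def)
  then have "designated degenerate_alg (eval degenerate_alg (\<lambda>_. True) q)"
    by (rule valid_in_designated[OF _ valid sqw_star_degenerate_alg]) simp
  then have "\<not> eval degenerate_alg (\<lambda>_. True) q"
    by (simp add: designated_degenerate_alg_iff)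
  ultimately show ?thesis
    by (rule provable_of_interderivable_fplus)
qed

theorem theorem4p1:
  fixes q :: "'v form"
  assumes "\<exists>f :: 'v form set \<Rightarrow> 'a. inj f"
  shows "valid_in TYPE('a) q \<longleftrightarrow> provable q"
proof
  assume "valid_in TYPE('a) q"
  then show "provable q"
    using assms valid_in_provable by blast
next
  assume "provable q"
  then show "valid_in TYPE('a) q"
    unfolding valid_in_def by (blast intro: provable_designated)
qed

end
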